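(* Let $(G,\mathcal F_\bullet G,\mathfrak R)$ be a filtered Rota–Baxter group. Then for every $n\ge1$ the map $\mathfrak R_n:\mathsf{gr}_nG\to\mathsf{gr}_nG$, $\mathfrak R_n(\bar x)=\overline{\mathfrak R(x)}$ for $x\in\mathcal F_nG$, is well defined and is a group homomorphism of $\mathsf{gr}_nG$.
   Context: For a group $G$ write $(x,y)=xyx^{-1}y^{-1}$; for subgroups $H,K$, $(H,K)$ is the subgroup generated by such commutators with $x\in H,y\in K$. A filtered group $(G,\mathcal F_\bullet G)$ is a group with subgroups $G=\mathcal F_1G\supset\mathcal F_2G\supset\cdots$ such that $(\mathcal F_nG,\mathcal F_mG)\subset\mathcal F_{n+m}G$; then each $\mathcal F_nG$ is normal in $G$ and $\mathsf{gr}_nG=\mathcal F_nG/\mathcal F_{n+1}G$ is an abelian group, written additively ($\bar x+\bar y=\overline{xy}$). A Rota–Baxter group is a group with a map $\mathfrak R$ such that $\mathfrak R(g)\mathfrak R(h)=\mathfrak R(g\mathfrak R(g)h\mathfrak R(g)^{-1})$ for all $g,h$; a filtered Rota–Baxter group is a filtered group with such an $\mathfrak R$ satisfying $\mathfrak R(\mathcal F_nG)\subset\mathcal F_nG$ for all $n\ge1$. *)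

theory Defs
  imports "HOL-Algebra.Algebra"
begin

definition grp_comm :: "('a, 'b) monoid_scheme \<Rightarrow> 'a \<Rightarrow> 'a \<Rightarrow> 'a" where
  "grp_comm G x y = x \<otimes>\<^bsub>G\<^esub> y \<otimes>\<^bsub>G\<^esub> inv\<^bsub>G\<^esub> x \<otimes>\<^bsub>G\<^esub> inv\<^bsub>G\<^esub> y"

definition comm_subgroup :: "('a, 'b) monoid_scheme \<Rightarrow> 'a set \<Rightarrow> 'a set \<Rightarrow> 'a set" where
  "comm_subgroup G H K = generate G {grp_comm G x y | x y. x \<in> H \<and> y \<in> K}"

text \<open>Filtration indexed by n >= 1; the value at index 0 is irrelevant.\<close>
definition filtered_group :: "('a, 'b) monoid_scheme \<Rightarrow> (nat \<Rightarrow> 'a set) \<Rightarrow> bool" where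
  "filtered_group G F \<longleftrightarrow> group G \<and> F 1 = carrier G
     \<and> (\<forall>n\<ge>1. subgroup (F n) G \<and> F (Suc n) \<subseteq> F n)
     \<and> (\<forall>n\<ge>1. \<forall>m\<ge>1. comm_subgroup G (F n) (F m) \<subseteq> F (n + m))"

definition rota_baxter :: "('a, 'b) monoid_scheme \<Rightarrow> ('a \<Rightarrow> 'a) \<Rightarrow> bool" where
  "rota_baxter G R \<longleftrightarrow> R \<in> carrier G \<rightarrow> carrier G \<and>
     (\<forall>g\<in>carrier G. \<forall>h\<in>carrier G.
        R g \<otimes>\<^bsub>G\<^esub> R h = R (g \<otimes>\<^bsub>G\<^esub> R g \<otimes>\<^bsub>G\<^esub> h \<otimes>\<^bsub>G\<^esub> inv\<^bsub>G\<^esub> (R g)))"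

definition filtered_rota_baxter ::
  "('a, 'b) monoid_scheme \<Rightarrow> (nat \<Rightarrow> 'a set) \<Rightarrow> ('a \<Rightarrow> 'a) \<Rightarrow> bool" where
  "filtered_rota_baxter G F R \<longleftrightarrow> filtered_group G F \<and> rota_baxter G R
     \<and> (\<forall>n\<ge>1. R ` F n \<subseteq> F n)"

definition gr :: "('a, 'b) monoid_scheme \<Rightarrow> (nat \<Rightarrow> 'a set) \<Rightarrow> nat \<Rightarrow> 'a set monoid" where
  "gr G F n = (G\<lparr>carrier := F n\<rparr>) Mod (F (Suc n))"

end

theory Submission
  imports Defs
begin

text \<open>
  Since \<open>F (n+1)\<close> is a normal subgroup mapped into itself by \<open>R\<close>, the Rota--Baxter identity
  \<open>R y \<otimes> R h = R (y \<otimes> R y \<otimes> h \<otimes> inv (R y))\<close> shows that \<open>R\<close> respects congruence modulo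
  \<open>F (n+1)\<close>: if \<open>x = k \<otimes> y\<close> with \<open>k \<in> F (n+1)\<close>, then \<open>R x = R y \<otimes> R h\<close> for a conjugate \<open>h\<close>
  of \<open>k\<close>. For multiplicativity, \<open>R x \<otimes> R y = R (x \<otimes> R x \<otimes> y \<otimes> inv (R x))\<close>, and the argument
  on the right differs from \<open>x \<otimes> y\<close> by a conjugate of the commutator \<open>(R x, y)\<close>, which lies
  in \<open>F (2n) \<subseteq> F (n+1)\<close> when \<open>x, y \<in> F n\<close>.
\<close>

lemma (in group) m_inv_cancel_left [simp]:
  "x \<in> carrier G \<Longrightarrow> y \<in> carrier G \<Longrightarrow> x \<otimes> (inv x \<otimes> y) = y"
  by (simp flip: m_assoc)

lemma (in group) inv_m_cancel_left [simp]:
  "x \<in> carrier G \<Longrightarrow> y \<in> carrier G \<Longrightarrow> inv x \<otimes> (x \<otimes> y) = y"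
  by (simp flip: m_assoc)

lemma rota_baxter_closed:
  "rota_baxter G R \<Longrightarrow> x \<in> carrier G \<Longrightarrow> R x \<in> carrier G"
  unfolding rota_baxter_def by blast

lemma rota_baxter_mult:
  "rota_baxter G R \<Longrightarrow> x \<in> carrier G \<Longrightarrow> y \<in> carrier G \<Longrightarrow>
    R x \<otimes>\<^bsub>G\<^esub> R y = R (x \<otimes>\<^bsub>G\<^esub> R x \<otimes>\<^bsub>G\<^esub> y \<otimes>\<^bsub>G\<^esub> inv\<^bsub>G\<^esub> (R x))"
  unfolding rota_baxter_def by blast

lemma (in group) rota_baxter_rcos_cong:
  assumes RB: "rota_baxter G R" and N: "N \<lhd> G" "R ` N \<subseteq> N"
    and x: "x \<in> carrier G" and y: "y \<in> carrier G" and xy: "N #> x = N #> y"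
  shows "N #> R x = N #> R y"
proof -
  have sub: "subgroup N G"
    using N normal_imp_subgroup by blast
  have Ry: "R y \<in> carrier G"
    using rota_baxter_closed[OF RB y] .
  have "x \<in> N #> y"
    using xy rcos_self[OF x sub] by simp
  then obtain k where k: "k \<in> N" and x_eq: "x = k \<otimes> y"
    unfolding r_coset_def by blast
  have kc: "k \<in> carrier G"
    using subgroup.mem_carrier[OF sub k] .
  define h where "h = inv (R y) \<otimes> (inv y \<otimes> k \<otimes> y) \<otimes> R y"
  have h: "h \<in> N"
    unfolding h_def
    using normal.inv_op_closed1[OF N(1) Ry normal.inv_op_closed1[OF N(1) y k]] .
  then have hc: "h \<in> carrier G"
    using subgroup.mem_carrier[OF sub] by blast
  have "y \<otimes> R y \<otimes> h \<otimes> inv (R y) = x"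
    unfolding h_def x_eq using kc y Ry by (simp add: m_assoc)
  then have "R x = R y \<otimes> R h"
    using rota_baxter_mult[OF RB y hc] by simp
  moreover have "R h \<in> N"
    using h N(2) by blast
  ultimately have "R x \<in> R y <# N"
    unfolding l_coset_def by blast
  then have "R x \<in> N #> R y"
    using normal.coset_eq[OF N(1)] Ry by blast
  then show ?thesis
    using repr_independence[OF _ Ry sub] by simp
qed

lemma (in group) rota_baxter_rcos_mult:
  assumes RB: "rota_baxter G R" and N: "N \<lhd> G" "R ` N \<subseteq> N"
    and x: "x \<in> carrier G" and y: "y \<in> carrier G" and comm: "grp_comm G (R x) y \<in> N"
  shows "N #> R (x \<otimes> y) = N #> (R x \<otimes> R y)"
proof -
  have sub: "subgroup N G"
    using N normal_imp_subgroup by blast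
  have Rx: "R x \<in> carrier G"
    using rota_baxter_closed[OF RB x] .
  define z where "z = x \<otimes> R x \<otimes> y \<otimes> inv (R x)"
  have zc: "z \<in> carrier G"
    unfolding z_def using x y Rx by simp
  have "z = (x \<otimes> grp_comm G (R x) y \<otimes> inv x) \<otimes> (x \<otimes> y)"
    unfolding z_def grp_comm_def using x y Rx by (simp add: m_assoc)
  moreover have "x \<otimes> grp_comm G (R x) y \<otimes> inv x \<in> N"
    using normal.inv_op_closed2[OF N(1) x comm] .
  ultimately have "z \<in> N #> (x \<otimes> y)"
    unfolding r_coset_def by blast
  then have "N #> (x \<otimes> y) = N #> z"
    using repr_independence[OF _ _ sub] x y by blast
  then have "N #> R (x \<otimes> y) = N #> R z"
    by (rule rota_baxter_rcos_cong[OF RB N m_closed[OF x y] zc])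
  also have "R z = R x \<otimes> R y"
    unfolding z_def using rota_baxter_mult[OF RB x y] by simp
  finally show ?thesis .
qed

lemma filtered_group_group: "filtered_group G F \<Longrightarrow> group G"
  unfolding filtered_group_def by blast

lemma filtered_group_first: "filtered_group G F \<Longrightarrow> F 1 = carrier G"
  unfolding filtered_group_def by blast

lemma filtered_group_subgroup: "filtered_group G F \<Longrightarrow> 1 \<le> k \<Longrightarrow> subgroup (F k) G"
  unfolding filtered_group_def by blast

lemma filtered_group_antimono:
  assumes "filtered_group G F" "1 \<le> k" "k \<le> m"
  shows "F m \<subseteq> F k"
  using assms(3)
proof (induction m rule: dec_induct)
  case (step m)
  then have "F (Suc m) \<subseteq> F m"
    using assms(1,2) unfolding filtered_group_def by simp
  with step.IH show ?case
    by blast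
qed simp

lemma filtered_group_grp_comm:
  assumes "filtered_group G F" "1 \<le> k" "1 \<le> m" "x \<in> F k" "y \<in> F m"
  shows "grp_comm G x y \<in> F (k + m)"
proof -
  have "comm_subgroup G (F k) (F m) \<subseteq> F (k + m)"
    using assms(1-3) unfolding filtered_group_def by blast
  then show ?thesis
    using assms(4,5) unfolding comm_subgroup_def by (blast intro: generate.incl)
qed

lemma (in group) filtered_group_normal:
  assumes FG: "filtered_group G F" and k: "1 \<le> k"
  shows "F k \<lhd> G"
proof -
  have sub: "subgroup (F k) G"
    using filtered_group_subgroup[OF FG k] .
  have "g \<otimes> h \<otimes> inv g \<in> F k" if g: "g \<in> carrier G" and h: "h \<in> F k" for g h
  proof -
    have hc: "h \<in> carrier G"
      using subgroup.mem_carrier[OF sub h] .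
    have "g \<in> F 1"
      using g filtered_group_first[OF FG] by simp
    then have "grp_comm G g h \<in> F (1 + k)"
      using filtered_group_grp_comm[OF FG order_refl k _ h] by simp
    then have "grp_comm G g h \<in> F k"
      using filtered_group_antimono[OF FG k, of "1 + k"] by (simp add: subset_iff)
    moreover have "g \<otimes> h \<otimes> inv g = grp_comm G g h \<otimes> h"
      unfolding grp_comm_def using g hc by (simp add: m_assoc)
    ultimately show ?thesis
      using subgroup.m_closed[OF sub _ h] by simp
  qed
  then show ?thesis
    using sub normal_inv_iff by blast
qed

lemma filtered_rota_baxter_grp_comm:
  assumes FRB: "filtered_rota_baxter G F R" and n: "1 \<le> n" and x: "x \<in> F n" and y: "y \<in> F n"
  shows "grp_comm G (R x) y \<in> F (Suc n)"
proof -
  have FG: "filtered_group G F"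
    using FRB unfolding filtered_rota_baxter_def by blast
  have "R x \<in> F n"
    using FRB n x unfolding filtered_rota_baxter_def by blast
  then have "grp_comm G (R x) y \<in> F (n + n)"
    using filtered_group_grp_comm[OF FG n n _ y] by blast
  then show ?thesis
    using filtered_group_antimono[OF FG, of "Suc n" "n + n"] n by (simp add: subset_iff)
qed

lemma (in group) induced_hom_Mod:
  assumes H: "subgroup H G" and N: "N \<lhd> G" "N \<subseteq> H" and f: "f ` H \<subseteq> H"
    and cong: "\<And>x y. x \<in> H \<Longrightarrow> y \<in> H \<Longrightarrow> N #> x = N #> y \<Longrightarrow> N #> f x = N #> f y"
    and mult: "\<And>x y. x \<in> H \<Longrightarrow> y \<in> H \<Longrightarrow> N #> f (x \<otimes> y) = N #> (f x \<otimes> f y)"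
  obtains g where "g \<in> hom (G\<lparr>carrier := H\<rparr> Mod N) (G\<lparr>carrier := H\<rparr> Mod N)"
    and "\<And>x. x \<in> H \<Longrightarrow> g (N #> x) = N #> f x"
proof -
  let ?K = "G\<lparr>carrier := H\<rparr>"
  have fc: "f x \<in> carrier G" if "x \<in> H" for x
    using that f subgroup.mem_carrier[OF H] by blast
  have hom: "(\<lambda>x. N #> f x) \<in> hom ?K (?K Mod N)"
  proof (rule homI)
    show "N #> f x \<in> carrier (?K Mod N)" if "x \<in> carrier ?K" for x
      using that f by (auto simp: carrier_FactGroup)
    show "N #> f (x \<otimes>\<^bsub>?K\<^esub> y) = (N #> f x) \<otimes>\<^bsub>?K Mod N\<^esub> (N #> f y)"
      if "x \<in> carrier ?K" "y \<in> carrier ?K" for x y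
      using that normal.rcos_sum[OF N(1) fc fc] mult by simp
  qed
  have cong_K: "N #> f x = N #> f y"
    if "x \<in> carrier ?K" "y \<in> carrier ?K" "N #>\<^bsub>?K\<^esub> x = N #>\<^bsub>?K\<^esub> y" for x y
    using that by (intro cong) simp_all
  show thesis
  proof (rule FactGroup_universal[OF hom normal_restrict_supergroup[OF H N] cong_K])
    fix g assume "g \<in> hom (?K Mod N) (?K Mod N)"
      and "\<And>x. x \<in> carrier ?K \<Longrightarrow> g (N #>\<^bsub>?K\<^esub> x) = N #> f x"
    then show thesis
      by (intro that) simp_all
  qed
qed

theorem proposition5p10:
  fixes G :: "('a, 'b) monoid_scheme" and F :: "nat \<Rightarrow> 'a set" and R :: "'a \<Rightarrow> 'a" and n :: nat
  assumes "filtered_rota_baxter G F R" and "n \<ge> 1"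
  shows "(\<forall>x\<in>F n. \<forall>y\<in>F n. F (Suc n) #>\<^bsub>G\<^esub> x = F (Suc n) #>\<^bsub>G\<^esub> y
            \<longrightarrow> F (Suc n) #>\<^bsub>G\<^esub> R x = F (Suc n) #>\<^bsub>G\<^esub> R y)
       \<and> (\<exists>f \<in> hom (gr G F n) (gr G F n).
            \<forall>x\<in>F n. f (F (Suc n) #>\<^bsub>G\<^esub> x) = F (Suc n) #>\<^bsub>G\<^esub> R x)"
proof -
  have FG: "filtered_group G F" and RB: "rota_baxter G R" and RF: "\<And>k. 1 \<le> k \<Longrightarrow> R ` F k \<subseteq> F k"
    using assms(1) unfolding filtered_rota_baxter_def by auto
  have grp: "group G"
    using filtered_group_group[OF FG] .
  have Fn: "subgroup (F n) G"
    using filtered_group_subgroup[OF FG assms(2)] .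
  have N: "F (Suc n) \<lhd> G" "F (Suc n) \<subseteq> F n" "R ` F (Suc n) \<subseteq> F (Suc n)"
    using group.filtered_group_normal[OF grp FG, of "Suc n"] RF[of "Suc n"]
      filtered_group_antimono[OF FG assms(2), of "Suc n"] by simp_all
  have Fn_carrier: "x \<in> carrier G" if "x \<in> F n" for x
    using subgroup.mem_carrier[OF Fn that] .
  have cong: "F (Suc n) #>\<^bsub>G\<^esub> R x = F (Suc n) #>\<^bsub>G\<^esub> R y"
    if "x \<in> F n" "y \<in> F n" "F (Suc n) #>\<^bsub>G\<^esub> x = F (Suc n) #>\<^bsub>G\<^esub> y" for x y
    using that by (rule group.rota_baxter_rcos_cong[OF grp RB N(1,3) Fn_carrier Fn_carrier])
  have mult: "F (Suc n) #>\<^bsub>G\<^esub> R (x \<otimes>\<^bsub>G\<^esub> y) = F (Suc n) #>\<^bsub>G\<^esub> (R x \<otimes>\<^bsub>G\<^esub> R y)"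
    if "x \<in> F n" "y \<in> F n" for x y
    using that filtered_rota_baxter_grp_comm[OF assms that]
    by (rule group.rota_baxter_rcos_mult[OF grp RB N(1,3) Fn_carrier Fn_carrier])
  obtain f where f_hom: "f \<in> hom (gr G F n) (gr G F n)"
    and f_coset: "\<And>x. x \<in> F n \<Longrightarrow> f (F (Suc n) #>\<^bsub>G\<^esub> x) = F (Suc n) #>\<^bsub>G\<^esub> R x"
    using group.induced_hom_Mod[OF grp Fn N(1,2) RF[OF assms(2)] cong mult] unfolding gr_def by blast
  show ?thesis
  proof (intro conjI ballI impI bexI[of _ f] f_hom)
    show "F (Suc n) #>\<^bsub>G\<^esub> R x = F (Suc n) #>\<^bsub>G\<^esub> R y"
      if "x \<in> F n" "y \<in> F n" "F (Suc n) #>\<^bsub>G\<^esub> x = F (Suc n) #>\<^bsub>G\<^esub> y" for x y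
      using that by (rule cong)
  qed (rule f_coset)
qed

end
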